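(* Let $K$ be an infinite field with $\mathrm{char}(K)\neq 2$. Let $Q\in\mathcal{Q}(n,d,m)$ and let $h$ be a closed path in $Q$ with $h\not\equiv 0$. Then $\deg(h)\leq M(n,d,m)$, where $M(n,d,m)=2n$ if $n=m$ and $d\in\{n,n+1\}$, and $M(n,d,m)=3n$ otherwise.
   Context: A quiver $Q$ is a finite oriented graph; for an arrow $a$, $a''$ is its tail and $a'$ its head. A path $a=a_1\cdots a_s$ ($a_i$ arrows) satisfies $a_i'=a_{i+1}''$; it is closed (in the vertex $a_1''$) if $a_1''=a_s'$; $\deg(a)=s$, $a''=a_1''$, $a'=a_s'$, $V(a)=\{a_1'',a_1',\dots,a_s'\}$. A closed path $a$ is primitive if for every $w\in V(a)$ exactly one $i$ has $a_i'=w$. $m(Q)$ is the maximal degree of a primitive closed path in $Q$; $Q$ is strongly connected if some closed path contains all vertices; $\mathcal{Q}(n,d,m)$ is the set of strongly connected quivers with $n$ vertices, $d$ arrows and $m(Q)=m$. Closed paths are incident if they are closed paths in the same vertex. The equivalence $\equiv$ is the equivalence relation on the set of closed paths of $Q$ together with the symbol $0$ (elements taken up to sign, with $-0=0$) generated by: (1) $ab\equiv ba$ for paths $a,b$ such that $ab$ is a closed path; (2) $a_{\sigma(1)}\cdots a_{\sigma(t)}\equiv \mathrm{sign}(\sigma)\,a_1\cdots a_t$ for incident closed paths $a_1,\dots,a_t$, $t\geq2$, $\sigma\in S_t$; (3) $a_1^2a_2\equiv0$ for incident closed paths $a_1,a_2$; (4) if $\mathrm{char}(K)=2$ then $a_1^2\equiv0$,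 and if $\mathrm{char}(K)\neq2$ then $a_1a_2a_3a_4\equiv0$, for incident closed paths $a_1,\dots,a_4$. *)

theory Defs
  imports Main "HOL-Combinatorics.Permutations"
begin

text \<open>A quiver is given by a finite vertex set V, a finite arrow set E and
  maps tail (a'') and head (a') sending arrows to vertices.\<close>

definition quiver :: "'v set \<Rightarrow> 'e set \<Rightarrow> ('e \<Rightarrow> 'v) \<Rightarrow> ('e \<Rightarrow> 'v) \<Rightarrow> bool" where
  "quiver V E tail head \<longleftrightarrow> finite V \<and> finite E \<and> (\<forall>a\<in>E. tail a \<in> V \<and> head a \<in> V)"

definition is_path :: "'e set \<Rightarrow> ('e \<Rightarrow> 'v) \<Rightarrow> ('e \<Rightarrow> 'v) \<Rightarrow> 'e list \<Rightarrow> bool" where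
  "is_path E tail head p \<longleftrightarrow> p \<noteq> [] \<and> set p \<subseteq> E \<and>
     (\<forall>i. Suc i < length p \<longrightarrow> head (p ! i) = tail (p ! Suc i))"

definition closed_path :: "'e set \<Rightarrow> ('e \<Rightarrow> 'v) \<Rightarrow> ('e \<Rightarrow> 'v) \<Rightarrow> 'e list \<Rightarrow> bool" where
  "closed_path E tail head p \<longleftrightarrow> is_path E tail head p \<and> tail (hd p) = head (last p)"

definition closed_path_in :: "'e set \<Rightarrow> ('e \<Rightarrow> 'v) \<Rightarrow> ('e \<Rightarrow> 'v) \<Rightarrow> 'v \<Rightarrow> 'e list \<Rightarrow> bool" where
  "closed_path_in E tail head v p \<longleftrightarrow> closed_path E tail head p \<and> tail (hd p) = v"

definition path_vertices :: "('e \<Rightarrow> 'v) \<Rightarrow> ('e \<Rightarrow> 'v) \<Rightarrow> 'e list \<Rightarrow> 'v set" where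
  "path_vertices tail head p = insert (tail (hd p)) (head ` set p)"

definition primitive :: "'e set \<Rightarrow> ('e \<Rightarrow> 'v) \<Rightarrow> ('e \<Rightarrow> 'v) \<Rightarrow> 'e list \<Rightarrow> bool" where
  "primitive E tail head p \<longleftrightarrow> closed_path E tail head p \<and>
     (\<forall>w\<in>path_vertices tail head p. \<exists>!i. i < length p \<and> head (p ! i) = w)"

definition mQ :: "'e set \<Rightarrow> ('e \<Rightarrow> 'v) \<Rightarrow> ('e \<Rightarrow> 'v) \<Rightarrow> nat" where
  "mQ E tail head = Max {length p | p. primitive E tail head p}"

definition strongly_connected :: "'v set \<Rightarrow> 'e set \<Rightarrow> ('e \<Rightarrow> 'v) \<Rightarrow> ('e \<Rightarrow> 'v) \<Rightarrow> bool" where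
  "strongly_connected V E tail head \<longleftrightarrow>
     (\<exists>p. closed_path E tail head p \<and> V \<subseteq> path_vertices tail head p)"

definition in_Qndm :: "'v set \<Rightarrow> 'e set \<Rightarrow> ('e \<Rightarrow> 'v) \<Rightarrow> ('e \<Rightarrow> 'v) \<Rightarrow> nat \<Rightarrow> nat \<Rightarrow> nat \<Rightarrow> bool" where
  "in_Qndm V E tail head n d m \<longleftrightarrow> quiver V E tail head \<and> strongly_connected V E tail head \<and>
     card V = n \<and> card E = d \<and> mQ E tail head = m"

text \<open>Signed elements: None is the symbol 0 (with -0 = 0), Some (s, p) is +p if s, -p otherwise.
  The relation below is the equivalence generated by (1)-(4), each generating relation being
  imposed for both signs (x \<equiv> y gives -x \<equiv> -y).  The flag c2 says whether char K = 2.\<close>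

type_synonym 'e selt = "(bool \<times> 'e list) option"

inductive path_equiv :: "'e set \<Rightarrow> ('e \<Rightarrow> 'v) \<Rightarrow> ('e \<Rightarrow> 'v) \<Rightarrow> bool \<Rightarrow> 'e selt \<Rightarrow> 'e selt \<Rightarrow> bool"
  for E tail head c2 where
  refl: "path_equiv E tail head c2 x x"
| sym: "path_equiv E tail head c2 x y \<Longrightarrow> path_equiv E tail head c2 y x"
| trans: "path_equiv E tail head c2 x y \<Longrightarrow> path_equiv E tail head c2 y z \<Longrightarrow> path_equiv E tail head c2 x z"
| rot: "a \<noteq> [] \<Longrightarrow> b \<noteq> [] \<Longrightarrow> closed_path E tail head (a @ b) \<Longrightarrow>
        path_equiv E tail head c2 (Some (s, a @ b)) (Some (s, b @ a))"
| perm: "length xs \<ge> 2 \<Longrightarrow> (\<forall>x\<in>set xs. closed_path_in E tail head v x) \<Longrightarrow> \<sigma> permutes {..<length xs} \<Longrightarrow>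
        path_equiv E tail head c2
          (Some (s, concat (map (\<lambda>i. xs ! \<sigma> i) [0..<length xs])))
          (Some (s = (sign \<sigma> = 1), concat xs))"
| sq: "closed_path_in E tail head v a1 \<Longrightarrow> closed_path_in E tail head v a2 \<Longrightarrow>
        path_equiv E tail head c2 (Some (s, a1 @ a1 @ a2)) None"
| char2: "c2 \<Longrightarrow> closed_path_in E tail head v a1 \<Longrightarrow>
        path_equiv E tail head c2 (Some (s, a1 @ a1)) None"
| four: "\<not> c2 \<Longrightarrow> closed_path_in E tail head v a1 \<Longrightarrow> closed_path_in E tail head v a2 \<Longrightarrow>
        closed_path_in E tail head v a3 \<Longrightarrow> closed_path_in E tail head v a4 \<Longrightarrow>
        path_equiv E tail head c2 (Some (s, a1 @ a2 @ a3 @ a4)) None"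

definition bound_M :: "nat \<Rightarrow> nat \<Rightarrow> nat \<Rightarrow> nat" where
  "bound_M n d m = (if n = m \<and> (d = n \<or> d = n + 1) then 2 * n else 3 * n)"

end

theory Submission
  imports Defs
begin

text \<open>Rotating a closed path h (relation (1)) so that it starts at a vertex v on it, h becomes a
  product of closed paths in v that meet v only at their end, one for each visit of h to v.
  If some vertex is visited four times, relation (4) kills h; by pigeonhole this happens as
  soon as deg h > 3n.  If n = m and d \<le> n + 1, then Q is a Hamiltonian cycle with at most
  one extra arrow, so every vertex except possibly one, b, has at most one outgoing arrow, and b
  has at most two.
  Taking v = b when h passes through b, each of these loops is determined by its first arrow and
  repeats no vertex, hence has length \<le> n.  So deg h > 2n forces at least three loops, and
  among three loops two leave v by the same arrow and therefore coincide, which kills h by (3).\<close>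

lemma tl_tails_eq_butlast_heads:
  "tl (map tail p) = butlast (map head p) \<longleftrightarrow>
    (\<forall>i. Suc i < length p \<longrightarrow> head (p ! i) = tail (p ! Suc i))"
proof -
  have "tl (map tail p) = butlast (map head p) \<longleftrightarrow>
      (\<forall>i < length p - 1. tail (p ! Suc i) = head (p ! i))"
    by (simp add: list_eq_iff_nth_eq nth_tl nth_butlast)
  also have "\<dots> \<longleftrightarrow> (\<forall>i. Suc i < length p \<longrightarrow> head (p ! i) = tail (p ! Suc i))"
    by (metis Suc_diff_1 less_diff_conv not_less_zero zero_less_Suc add.commute plus_1_eq_Suc)
  finally show ?thesis .
qed

lemma is_path_iff:
  "is_path E tail head p \<longleftrightarrow> p \<noteq> [] \<and> set p \<subseteq> E \<and> tl (map tail p) = butlast (map head p)"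
  unfolding is_path_def tl_tails_eq_butlast_heads ..

lemma is_path_append:
  assumes "a \<noteq> []" "b \<noteq> []"
  shows "is_path E tail head (a @ b) \<longleftrightarrow>
    is_path E tail head a \<and> is_path E tail head b \<and> head (last a) = tail (hd b)"
proof -
  have tails: "tl (map tail (a @ b)) = tl (map tail a) @ tail (hd b) # tl (map tail b)"
    using assms by (cases a; cases b) auto
  have "map head a = butlast (map head a) @ [head (last a)]"
    using assms by (cases a rule: rev_cases) auto
  then have heads: "butlast (map head (a @ b)) = butlast (map head a) @ head (last a) # butlast (map head b)"
    using assms by (simp add: butlast_append)
  have "length (tl (map tail a)) = length (butlast (map head a))" by simp
  then have "tl (map tail (a @ b)) = butlast (map head (a @ b)) \<longleftrightarrow>
     tl (map tail a) = butlast (map head a) \<and> tail (hd b) = head (last a) \<and>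
     tl (map tail b) = butlast (map head b)"
    unfolding tails heads by simp
  then show ?thesis using assms unfolding is_path_iff by auto
qed

lemma is_path_nth: "is_path E tail head p \<Longrightarrow> Suc i < length p \<Longrightarrow> head (p ! i) = tail (p ! Suc i)"
  unfolding is_path_def by blast

lemma is_path_infix:
  assumes "is_path E tail head (a @ r @ b)" "r \<noteq> []"
  shows "is_path E tail head r"
proof -
  have "is_path E tail head (r @ b)"
    using assms by (cases "a = []") (simp_all add: is_path_append)
  then show ?thesis
    using assms(2) by (cases "b = []") (simp_all add: is_path_append)
qed

lemma is_path_drop:
  assumes "is_path E tail head p" "n < length p"
  shows "is_path E tail head (drop n p)"
proof -
  have "is_path E tail head (take n p @ drop n p @ [])" using assms(1) by simp
  from is_path_infix[OF this] show ?thesis using assms(2) by simp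
qed

lemma closed_path_nonempty: "closed_path E tail head p \<Longrightarrow> p \<noteq> []"
  unfolding closed_path_def is_path_def by blast

lemma closed_path_append_swap:
  assumes "a \<noteq> []" "b \<noteq> []" "closed_path E tail head (a @ b)"
  shows "closed_path E tail head (b @ a)"
  using assms unfolding closed_path_def is_path_append[OF assms(1,2)] is_path_append[OF assms(2,1)]
  by simp

lemma closed_path_in_append:
  assumes "closed_path_in E tail head v a" "closed_path_in E tail head v b"
  shows "closed_path_in E tail head v (a @ b)"
proof -
  have "a \<noteq> []" "b \<noteq> []"
    using assms closed_path_nonempty unfolding closed_path_in_def by blast+
  then show ?thesis using assms unfolding closed_path_in_def closed_path_def
    by (auto simp: is_path_append)
qed

lemma closed_path_in_concat:
  "ps \<noteq> [] \<Longrightarrow> \<forall>p\<in>set ps. closed_path_in E tail head v p \<Longrightarrow>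
    closed_path_in E tail head v (concat ps)"
proof (induction ps)
  case (Cons p ps)
  then show ?case by (cases "ps = []") (auto intro: closed_path_in_append)
qed simp

lemma closed_path_rotate:
  assumes "closed_path E tail head h"
  shows "closed_path E tail head (rotate k h)"
    and "path_equiv E tail head c2 (Some (s, h)) (Some (s, rotate k h))"
proof -
  let ?j = "k mod length h"
  have "closed_path E tail head (rotate k h) \<and>
    path_equiv E tail head c2 (Some (s, h)) (Some (s, rotate k h))"
  proof (cases "?j = 0")
    case True
    then show ?thesis using assms by (simp add: rotate_id path_equiv.refl)
  next
    case False
    have "?j < length h" using closed_path_nonempty[OF assms] by simp
    then have ne: "take ?j h \<noteq> []" "drop ?j h \<noteq> []" using False by auto
    have rot: "rotate k h = drop ?j h @ take ?j h" by (rule rotate_drop_take)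
    have closed: "closed_path E tail head (take ?j h @ drop ?j h)" using assms by simp
    then have "closed_path E tail head (drop ?j h @ take ?j h)"
      by (rule closed_path_append_swap[OF ne])
    moreover have "path_equiv E tail head c2 (Some (s, take ?j h @ drop ?j h)) (Some (s, drop ?j h @ take ?j h))"
      by (rule path_equiv.rot[OF ne closed])
    ultimately show ?thesis unfolding rot by simp
  qed
  then show "closed_path E tail head (rotate k h)"
    and "path_equiv E tail head c2 (Some (s, h)) (Some (s, rotate k h))" by blast+
qed

lemma tail_hd_rotate_Suc:
  assumes "closed_path E tail head h" "i < length h"
  shows "tail (hd (rotate (Suc i) h)) = head (h ! i)"
proof (cases "Suc i = length h")
  case True
  have "rotate (Suc i) h = h" unfolding True by (rule rotate_id) simp
  moreover have "last h = h ! i"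
    using last_conv_nth[OF closed_path_nonempty[OF assms(1)]] True[symmetric] by simp
  ultimately show ?thesis using assms(1) unfolding closed_path_def by simp
next
  case False
  then have "rotate (Suc i) h = drop (Suc i) h @ take (Suc i) h" "Suc i < length h"
    using assms(2) by (simp_all add: rotate_drop_take)
  moreover have "head (h ! i) = tail (h ! Suc i)"
    using assms(1) \<open>Suc i < length h\<close> unfolding closed_path_def by (blast intro: is_path_nth)
  ultimately show ?thesis by (simp add: hd_drop_conv_nth)
qed

lemma closed_path_heads_rotate1_tails:
  assumes "closed_path E tail head c"
  shows "rotate1 (map tail c) = map head c"
proof -
  have "c \<noteq> []" by (rule closed_path_nonempty[OF assms])
  then have "map head c = butlast (map head c) @ [head (last c)]"
    by (cases c rule: rev_cases) auto
  moreover have "tl (map tail c) = butlast (map head c)" "tail (hd c) = head (last c)"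
    using assms unfolding closed_path_def is_path_iff by auto
  ultimately show ?thesis using \<open>c \<noteq> []\<close> by (simp add: rotate1_hd_tl hd_map)
qed

lemma count_list_rotate: "count_list (rotate k xs) x = count_list xs x"
proof -
  let ?j = "k mod length xs"
  have "count_list (rotate k xs) x = count_list (drop ?j xs) x + count_list (take ?j xs) x"
    by (simp add: rotate_drop_take)
  also have "\<dots> = count_list (take ?j xs @ drop ?j xs) x"
    by (simp only: count_list_append add.commute)
  finally show ?thesis by simp
qed

lemma pigeonhole_count_list:
  assumes "finite V" "set xs \<subseteq> V" "length xs > k * card V"
  obtains v where "count_list xs v > k"
proof (rule ccontr)
  assume "\<not> thesis"
  with that have "\<forall>v\<in>V. count_list xs v \<le> k" by (meson not_less)
  then have "sum (count_list xs) V \<le> k * card V"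
    using sum_bounded_above[of V "count_list xs" k] by (simp add: mult.commute)
  with sum_count_set[OF assms(2,1)] assms(3) show False by simp
qed

lemma nth_in_set_butlast: "Suc k < length xs \<Longrightarrow> xs ! k \<in> set (butlast xs)"
  by (metis length_butlast less_diff_conv nth_butlast nth_mem Suc_eq_plus1)

lemma distinct_map_nthI:
  assumes "\<And>i j. i < j \<Longrightarrow> j < length xs \<Longrightarrow> f (xs ! i) \<noteq> f (xs ! j)"
  shows "distinct (map f xs)"
  unfolding distinct_conv_nth
proof (intro allI impI)
  fix i j assume "i < length (map f xs)" "j < length (map f xs)" "i \<noteq> j"
  then show "map f xs ! i \<noteq> map f xs ! j"
    using assms[of i j] assms[of j i] by (cases i j rule: linorder_cases) auto
qed

lemma length_concat_le:
  "(\<And>xs. xs \<in> set xss \<Longrightarrow> length xs \<le> n) \<Longrightarrow> length (concat xss) \<le> length xss * n"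
  by (induction xss) (simp_all add: add_mono)

lemma primitive_iff_distinct_heads:
  "primitive E tail head c \<longleftrightarrow> closed_path E tail head c \<and> distinct (map head c)"
proof (cases "closed_path E tail head c")
  case True
  then have "tail (hd c) \<in> head ` set c"
    using closed_path_nonempty[OF True] unfolding closed_path_def by simp
  then have "path_vertices tail head c = set (map head c)"
    unfolding path_vertices_def by auto
  moreover have "(\<forall>w\<in>set (map head c). \<exists>!i. i < length c \<and> head (c ! i) = w) \<longleftrightarrow>
      distinct (map head c)"
  proof
    assume unique: "\<forall>w\<in>set (map head c). \<exists>!i. i < length c \<and> head (c ! i) = w"
    show "distinct (map head c)" unfolding distinct_conv_nth
    proof (intro allI impI)
      fix i j assume ij: "i < length (map head c)" "j < length (map head c)" "i \<noteq> j"
      then have "head (c ! i) \<in> set (map head c)" by simp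
      then have "\<exists>!k. k < length c \<and> head (c ! k) = head (c ! i)" using unique by blast
      then show "map head c ! i \<noteq> map head c ! j" using ij by auto
    qed
  next
    assume "distinct (map head c)"
    from distinct_Ex1[OF this]
    show "\<forall>w\<in>set (map head c). \<exists>!i. i < length c \<and> head (c ! i) = w"
      by (simp cong: conj_cong)
  qed
  ultimately show ?thesis unfolding primitive_def using True by simp
qed (simp add: primitive_def)

lemma length_le_card_if_distinct_heads:
  assumes "quiver V E tail head" "set p \<subseteq> E" "distinct (map head p)"
  shows "length p \<le> card V"
proof -
  have "set (map head p) \<subseteq> V" "finite V" using assms(1,2) unfolding quiver_def by auto
  then have "card (set (map head p)) \<le> card V" by (rule card_mono[rotated])
  then show ?thesis using distinct_card[OF assms(3)] by simp
qed

lemma shortest_closed_path_primitive: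
  assumes "closed_path E tail head q"
    and shortest: "\<And>r. closed_path E tail head r \<Longrightarrow> length q \<le> length r"
  shows "primitive E tail head q"
proof -
  have "head (q ! i) \<noteq> head (q ! j)" if ij: "i < j" "j < length q" for i j
  proof
    assume repeat: "head (q ! i) = head (q ! j)"
    define r where "r = drop (Suc i) (take (Suc j) q)"
    have "take (Suc i) (take (Suc j) q) = take (Suc i) q" using ij by (simp add: min_def)
    then have "take (Suc j) q = take (Suc i) q @ r"
      unfolding r_def by (metis append_take_drop_id)
    then have split: "take (Suc i) q @ r @ drop (Suc j) q = q"
      by (metis append.assoc append_take_drop_id)
    have r: "length r = j - i" "r \<noteq> []" "hd r = q ! Suc i" "last r = q ! j"
      unfolding r_def using ij by (auto simp: hd_drop_conv_nth last_conv_nth)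
    have path: "is_path E tail head q" using assms(1) unfolding closed_path_def by blast
    then have "is_path E tail head r"
      using is_path_infix[of E tail head "take (Suc i) q" r "drop (Suc j) q"] r(2)
      unfolding split by blast
    moreover have "tail (q ! Suc i) = head (q ! i)" using is_path_nth[OF path] ij by simp
    ultimately have "closed_path E tail head r" unfolding closed_path_def using r repeat by simp
    then show False using shortest r(1) ij by fastforce
  qed
  then have "distinct (map head q)" by (rule distinct_map_nthI)
  then show ?thesis using assms(1) primitive_iff_distinct_heads by blast
qed

lemma mQ_attained:
  assumes "quiver V E tail head" "strongly_connected V E tail head"
  obtains c where "primitive E tail head c" "length c = mQ E tail head"
proof -
  let ?S = "{length p | p. primitive E tail head p}"
  have "?S \<subseteq> {..card V}"
    using length_le_card_if_distinct_heads[OF assms(1)]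
    by (auto simp: primitive_iff_distinct_heads closed_path_def is_path_def)
  then have "finite ?S" by (rule finite_subset) simp
  obtain p where "closed_path E tail head p"
    using assms(2) unfolding strongly_connected_def by blast
  then obtain q where "closed_path E tail head q" "\<And>r. closed_path E tail head r \<Longrightarrow> length q \<le> length r"
    using ex_has_least_nat[of "closed_path E tail head" p length] by blast
  then have "primitive E tail head q" by (rule shortest_closed_path_primitive)
  then have "?S \<noteq> {}" by blast
  with \<open>finite ?S\<close> have "Max ?S \<in> ?S" by (rule Max_in)
  then obtain c where "primitive E tail head c" "length c = Max ?S" by auto
  then show ?thesis by (intro that) (simp_all add: mQ_def)
qed

definition first_return_loop ::
    "'e set \<Rightarrow> ('e \<Rightarrow> 'v) \<Rightarrow> ('e \<Rightarrow> 'v) \<Rightarrow> 'v \<Rightarrow> 'e list \<Rightarrow> bool" where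
  "first_return_loop E tail head v p \<longleftrightarrow>
     closed_path_in E tail head v p \<and> v \<notin> set (butlast (map head p))"

lemma first_return_loop_path:
  "first_return_loop E tail head v p \<Longrightarrow> is_path E tail head p"
  unfolding first_return_loop_def closed_path_in_def closed_path_def by blast

lemma first_return_loop_head_nth:
  assumes "first_return_loop E tail head v p" "k < length p"
  shows "head (p ! k) = v \<longleftrightarrow> Suc k = length p"
proof
  assume "head (p ! k) = v"
  moreover have "v \<notin> set (butlast (map head p))"
    using assms(1) unfolding first_return_loop_def by blast
  ultimately have "\<not> Suc k < length p" using nth_in_set_butlast[of k "map head p"] by auto
  then show "Suc k = length p" using assms(2) by simp
next
  assume "Suc k = length p"
  then have "p \<noteq> []" "k = length p - 1" by auto
  then have "p ! k = last p" by (simp add: last_conv_nth)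
  then show "head (p ! k) = v"
    using assms(1) unfolding first_return_loop_def closed_path_in_def closed_path_def by auto
qed

lemma closed_path_in_split_first_return_loops:
  "closed_path_in E tail head v h \<Longrightarrow>
    \<exists>ps. h = concat ps \<and> (\<forall>p\<in>set ps. first_return_loop E tail head v p)"
proof (induction "length h" arbitrary: h rule: less_induct)
  case less
  have ne: "h \<noteq> []" using less.prems closed_path_nonempty unfolding closed_path_in_def by blast
  then have "\<exists>x\<in>set h. head x = v"
    using less.prems unfolding closed_path_in_def closed_path_def by (metis last_in_set)
  then obtain ys x zs where h: "h = ys @ x # zs" and "head x = v" and "\<forall>y\<in>set ys. head y \<noteq> v"
    using split_list_first_prop[of h "\<lambda>x. head x = v"] by blast
  define p where "p = ys @ [x]"
  have p: "h = p @ zs" "p \<noteq> []" "head (last p) = v" "v \<notin> set (butlast (map head p))"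
    unfolding p_def h using \<open>head x = v\<close> \<open>\<forall>y\<in>set ys. head y \<noteq> v\<close> by auto
  show ?case
  proof (cases "zs = []")
    case True
    then have "first_return_loop E tail head v h"
      using less.prems p unfolding first_return_loop_def by simp
    then show ?thesis by (intro exI[of _ "[h]"]) simp
  next
    case False
    have "is_path E tail head p" "is_path E tail head zs" "head (last p) = tail (hd zs)"
      "tail (hd p) = v" "head (last zs) = v"
      using less.prems p False is_path_append[OF p(2) False]
      unfolding closed_path_in_def closed_path_def by auto
    then have "first_return_loop E tail head v p" "closed_path_in E tail head v zs"
      using p unfolding first_return_loop_def closed_path_in_def closed_path_def by auto
    moreover obtain ps where "zs = concat ps" "\<forall>q\<in>set ps. first_return_loop E tail head v q"
      using less.hyps[of zs] \<open>closed_path_in E tail head v zs\<close> p by auto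
    ultimately show ?thesis using p(1) by (intro exI[of _ "p # ps"]) simp
  qed
qed

lemma count_list_heads_first_return_loop:
  assumes "first_return_loop E tail head v p"
  shows "count_list (map head p) v = 1"
proof -
  have "p \<noteq> []" "head (last p) = v" "v \<notin> set (butlast (map head p))"
    using assms closed_path_nonempty
    unfolding first_return_loop_def closed_path_in_def closed_path_def by auto
  moreover have "map head p = butlast (map head p) @ [head (last p)]"
    using \<open>p \<noteq> []\<close> by (cases p rule: rev_cases) auto
  ultimately show ?thesis by (metis count_list_append count_notin count_list.simps add_0)
qed

lemma count_list_heads_concat_first_return_loops:
  "\<forall>p\<in>set ps. first_return_loop E tail head v p \<Longrightarrow> count_list (map head (concat ps)) v = length ps"
  by (induction ps) (auto simp: count_list_heads_first_return_loop)

lemma closed_path_rotate_split_first_return_loops: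
  assumes "closed_path E tail head h" "v \<in> set (map head h)"
  obtains k ps where "concat ps = rotate k h" "\<forall>p\<in>set ps. first_return_loop E tail head v p"
proof -
  obtain i where i: "i < length h" "head (h ! i) = v" using assms(2) by (auto simp: in_set_conv_nth)
  have "closed_path_in E tail head v (rotate (Suc i) h)"
    using closed_path_rotate(1)[OF assms(1), of "Suc i"] tail_hd_rotate_Suc[OF assms(1) i(1)] i(2)
    unfolding closed_path_in_def by simp
  from closed_path_in_split_first_return_loops[OF this] obtain ps
    where "rotate (Suc i) h = concat ps" "\<forall>p\<in>set ps. first_return_loop E tail head v p" by blast
  then show ?thesis using that[of ps "Suc i"] by simp
qed

lemma path_equiv_zero_if_four_returns:
  assumes "\<not> c2" "closed_path E tail head h" "4 \<le> count_list (map head h) v"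
  shows "path_equiv E tail head c2 (Some (s, h)) None"
proof -
  have "v \<in> set (map head h)" using assms(3) count_notin by fastforce
  with assms(2) obtain k ps where ps: "concat ps = rotate k h"
    "\<forall>p\<in>set ps. first_return_loop E tail head v p"
    by (rule closed_path_rotate_split_first_return_loops)
  have "length ps = count_list (map head h) v"
    using count_list_heads_concat_first_return_loops[OF ps(2)]
    by (simp only: ps(1) rotate_map[symmetric] count_list_rotate)
  then have "4 \<le> length ps" using assms(3) by simp
  then obtain p1 p2 p3 p4 r where pr: "ps = p1 # p2 # p3 # p4 # r"
    by (auto simp: Suc_le_length_iff numeral_eq_Suc)
  have loops: "\<forall>p\<in>set ps. closed_path_in E tail head v p"
    using ps(2) unfolding first_return_loop_def by blast
  then have "closed_path_in E tail head v (concat (p4 # r))"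
    using pr by (intro closed_path_in_concat) auto
  then have "path_equiv E tail head c2 (Some (s, p1 @ p2 @ p3 @ concat (p4 # r))) None"
    using loops pr by (intro path_equiv.four[OF assms(1)]) auto
  then have "path_equiv E tail head c2 (Some (s, rotate k h)) None" using ps(1) pr by simp
  with closed_path_rotate(2)[OF assms(2)] show ?thesis by (rule path_equiv.trans)
qed

lemma path_equiv_zero_if_repeated_loop:
  assumes "closed_path_in E tail head v p1" "closed_path_in E tail head v p2"
    "closed_path_in E tail head v p3" "p1 = p2 \<or> p2 = p3 \<or> p1 = p3"
  shows "path_equiv E tail head c2 (Some (s, p1 @ p2 @ p3)) None"
proof -
  have ne: "p1 \<noteq> []" "p3 \<noteq> []"
    using assms(1,3) closed_path_nonempty unfolding closed_path_in_def by blast+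
  have closed: "closed_path E tail head (p1 @ p2 @ p3)"
    using closed_path_in_append[OF assms(1) closed_path_in_append[OF assms(2,3)]]
    unfolding closed_path_in_def by blast
  consider "p1 = p2" | "p2 = p3" | "p1 = p3" using assms(4) by blast
  then show ?thesis
  proof cases
    case 1
    then show ?thesis using path_equiv.sq[OF assms(1,3)] by simp
  next
    case 2
    have "path_equiv E tail head c2 (Some (s, p1 @ (p2 @ p3))) (Some (s, (p2 @ p3) @ p1))"
      using ne closed by (intro path_equiv.rot) simp_all
    then have "path_equiv E tail head c2 (Some (s, p1 @ p2 @ p3)) (Some (s, p2 @ p2 @ p1))"
      using 2 by simp
    from path_equiv.trans[OF this path_equiv.sq[OF assms(2,1)]] show ?thesis .
  next
    case 3
    have "path_equiv E tail head c2 (Some (s, (p1 @ p2) @ p3)) (Some (s, p3 @ (p1 @ p2)))"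
      using ne closed by (intro path_equiv.rot) simp_all
    then have "path_equiv E tail head c2 (Some (s, p1 @ p2 @ p3)) (Some (s, p1 @ p1 @ p2))"
      using 3 by simp
    from path_equiv.trans[OF this path_equiv.sq[OF assms(1,2)]] show ?thesis .
  qed
qed

definition single_exit :: "'e set \<Rightarrow> ('e \<Rightarrow> 'v) \<Rightarrow> 'v \<Rightarrow> bool" where
  "single_exit E tail x \<longleftrightarrow> (\<forall>a\<in>E. \<forall>b\<in>E. tail a = x \<longrightarrow> tail b = x \<longrightarrow> a = b)"

definition out_arrows :: "'e set \<Rightarrow> ('e \<Rightarrow> 'v) \<Rightarrow> 'v \<Rightarrow> 'e set" where
  "out_arrows E tail x = {a \<in> E. tail a = x}"

lemma paths_agree_if_single_exits:
  assumes "is_path E tail head p" "is_path E tail head q" "hd p = hd q"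
    and exits: "\<forall>x\<in>set (butlast (map head p)). single_exit E tail x"
  shows "k < length p \<Longrightarrow> k < length q \<Longrightarrow> p ! k = q ! k"
proof (induction k)
  case 0
  then show ?case using assms(3) by (simp add: hd_conv_nth)
next
  case (Suc k)
  then have "p ! k = q ! k" by simp
  moreover have "single_exit E tail (head (p ! k))"
    using exits nth_in_set_butlast[of k "map head p"] Suc.prems by simp
  moreover have "tail (p ! Suc k) = head (p ! k)" "tail (q ! Suc k) = head (q ! k)"
    using is_path_nth[OF assms(1)] is_path_nth[OF assms(2)] Suc.prems by simp_all
  moreover have "p ! Suc k \<in> E" "q ! Suc k \<in> E"
    using assms(1,2) Suc.prems unfolding is_path_def by (auto dest: nth_mem)
  ultimately show ?case unfolding single_exit_def by metis
qed

lemma first_return_loops_eq_if_single_exits: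
  assumes p: "first_return_loop E tail head v p" and q: "first_return_loop E tail head v q"
    and "hd p = hd q" and exits: "\<forall>x\<in>set (butlast (map head p)). single_exit E tail x"
  shows "p = q"
proof -
  have paths: "is_path E tail head p" "is_path E tail head q"
    using p q by (simp_all add: first_return_loop_path)
  then have "0 < length p" "0 < length q" unfolding is_path_def by blast+
  note agree = paths_agree_if_single_exits[OF paths \<open>hd p = hd q\<close> exits]
  define k where "k = min (length p) (length q) - 1"
  have "Suc k = min (length p) (length q)"
    using \<open>0 < length p\<close> \<open>0 < length q\<close> unfolding k_def by simp
  then have k: "k < length p" "k < length q" "Suc k = length p \<or> Suc k = length q"
    by (auto simp: min_def split: if_splits)
  have "p ! k = q ! k" using agree k by blast
  then have "Suc k = length p \<longleftrightarrow> Suc k = length q"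
    using first_return_loop_head_nth[OF p k(1)] first_return_loop_head_nth[OF q k(2)] by simp
  then have "length p = length q" using k(3) by auto
  then show ?thesis using agree by (auto intro: nth_equalityI)
qed

lemma first_return_loop_length_le_card:
  assumes "quiver V E tail head" and loop: "first_return_loop E tail head v p"
    and exits: "\<forall>x\<in>set (butlast (map head p)). single_exit E tail x"
  shows "length p \<le> card V"
proof -
  have path: "is_path E tail head p" using loop by (rule first_return_loop_path)
  have "head (p ! i) \<noteq> head (p ! j)" if ij: "i < j" "j < length p" for i j
  proof
    assume repeat: "head (p ! i) = head (p ! j)"
    have "head (p ! i) \<noteq> v" using first_return_loop_head_nth[OF loop, of i] ij by simp
    then have "Suc j < length p"
      using first_return_loop_head_nth[OF loop ij(2)] repeat ij(2)
      by (cases "Suc j = length p") (simp_all add: Suc_lessI)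
    let ?p = "drop (Suc i) p" and ?q = "drop (Suc j) p"
    have "single_exit E tail (head (p ! i))"
      using exits nth_in_set_butlast[of i "map head p"] ij by simp
    moreover have "tail (p ! Suc i) = head (p ! i)" "tail (p ! Suc j) = head (p ! j)"
      using is_path_nth[OF path] ij \<open>Suc j < length p\<close> by simp_all
    moreover have "p ! Suc i \<in> E" "p ! Suc j \<in> E"
      using path ij \<open>Suc j < length p\<close> unfolding is_path_def by (auto dest: nth_mem)
    ultimately have "p ! Suc i = p ! Suc j" using repeat unfolding single_exit_def by metis
    then have "hd ?p = hd ?q" using ij \<open>Suc j < length p\<close> by (simp add: hd_drop_conv_nth)
    moreover have "is_path E tail head ?p" "is_path E tail head ?q"
      using is_path_drop[OF path] ij \<open>Suc j < length p\<close> by simp_all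
    moreover have "butlast (map head ?p) = drop (Suc i) (butlast (map head p))"
      by (metis butlast_drop drop_map)
    then have "\<forall>x\<in>set (butlast (map head ?p)). single_exit E tail x"
      using exits set_drop_subset by (metis subsetD)
    ultimately have agree: "?p ! k = ?q ! k" if "k < length ?q" for k
      using paths_agree_if_single_exits[of E tail head ?p ?q] that ij by simp
    define k where "k = length p - Suc j - 1"
    have "?p ! k = p ! (Suc i + k)" "?q ! k = p ! (Suc j + k)"
      using \<open>Suc j < length p\<close> ij by (simp_all add: k_def)
    moreover have "head (p ! (Suc j + k)) = v" "head (p ! (Suc i + k)) \<noteq> v"
      using first_return_loop_head_nth[OF loop, of "Suc j + k"]
        first_return_loop_head_nth[OF loop, of "Suc i + k"] \<open>Suc j < length p\<close> ij
      by (simp_all add: k_def)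
    ultimately show False using agree[of k] \<open>Suc j < length p\<close> by (simp add: k_def)
  qed
  then have "distinct (map head p)" by (rule distinct_map_nthI)
  moreover have "set p \<subseteq> E" using path unfolding is_path_def by blast
  ultimately show ?thesis using length_le_card_if_distinct_heads[OF assms(1)] by blast
qed

lemma single_exits_if_few_extra_arrows:
  assumes "finite E" "primitive E tail head c" "card E \<le> length c + 1"
  obtains b where "\<And>x. x \<noteq> b \<Longrightarrow> single_exit E tail x" "\<And>x. card (out_arrows E tail x) \<le> 2"
proof -
  have closed: "closed_path E tail head c" and "distinct (map head c)"
    using assms(2) by (simp_all add: primitive_iff_distinct_heads)
  then have "distinct (map tail c)"
    using closed_path_heads_rotate1_tails[OF closed] by (metis distinct1_rotate)
  then have tails_inj: "inj_on tail (set c)" and "distinct c" by (simp_all add: distinct_map)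
  have c_in_E: "set c \<subseteq> E" using closed unfolding closed_path_def is_path_def by blast
  have "card (E - set c) \<le> 1"
    using card_Diff_subset[OF finite_set c_in_E] distinct_card[OF \<open>distinct c\<close>] assms(3) by simp
  then have extra: "\<forall>a\<in>E - set c. \<forall>a'\<in>E - set c. a = a'"
    using card_le_Suc0_iff_eq[of "E - set c"] assms(1) by simp
  have "\<exists>b. \<forall>a\<in>E - set c. tail a = b"
  proof (cases "E - set c = {}")
    case False
    then obtain a0 where "a0 \<in> E - set c" by blast
    then have "\<forall>a\<in>E - set c. a = a0" using extra by blast
    then show ?thesis by (intro exI[of _ "tail a0"]) simp
  next
    case True
    show ?thesis unfolding True by simp
  qed
  then obtain b where b: "\<forall>a\<in>E - set c. tail a = b" by blast
  have cycle_exits: "card {a \<in> set c. tail a = x} \<le> 1" for x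
  proof -
    have "\<forall>a\<in>{a \<in> set c. tail a = x}. \<forall>a'\<in>{a \<in> set c. tail a = x}. a = a'"
      using tails_inj unfolding inj_on_def by simp
    then show ?thesis using card_le_Suc0_iff_eq[of "{a \<in> set c. tail a = x}"] by simp
  qed
  show ?thesis
  proof (rule that)
    fix x assume "x \<noteq> b"
    show "single_exit E tail x" unfolding single_exit_def
    proof (intro ballI impI)
      fix a a' assume "a \<in> E" "a' \<in> E" "tail a = x" "tail a' = x"
      moreover have "y \<in> set c" if "y \<in> E" "tail y = x" for y
        using b \<open>x \<noteq> b\<close> that by force
      ultimately have "a \<in> set c" "a' \<in> set c" by simp_all
      then show "a = a'" using tails_inj \<open>tail a = x\<close> \<open>tail a' = x\<close> unfolding inj_on_def by simp
    qed
  next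
    fix x
    have "out_arrows E tail x \<subseteq> {a \<in> set c. tail a = x} \<union> (E - set c)"
      unfolding out_arrows_def by blast
    then have "card (out_arrows E tail x) \<le> card ({a \<in> set c. tail a = x} \<union> (E - set c))"
      by (rule card_mono[rotated]) (simp add: assms(1))
    also have "\<dots> \<le> card {a \<in> set c. tail a = x} + card (E - set c)" by (rule card_Un_le)
    finally show "card (out_arrows E tail x) \<le> 2"
      using cycle_exits[of x] \<open>card (E - set c) \<le> 1\<close> by simp
  qed
qed

lemma first_return_loop_hd_out_arrow:
  "first_return_loop E tail head v p \<Longrightarrow> hd p \<in> out_arrows E tail v"
  unfolding first_return_loop_def closed_path_in_def closed_path_def is_path_def out_arrows_def
  by auto

lemma path_equiv_zero_if_long_with_few_exits:
  assumes "\<not> c2" "quiver V E tail head" "closed_path E tail head h" "2 * card V < length h"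
    and v: "v \<in> set (map head h)"
    and exits: "\<forall>x\<in>set (map head h) - {v}. single_exit E tail x"
    and out_v: "card (out_arrows E tail v) \<le> 2"
  shows "path_equiv E tail head c2 (Some (s, h)) None"
proof -
  from assms(3) v obtain k ps where ps: "concat ps = rotate k h"
    "\<forall>p\<in>set ps. first_return_loop E tail head v p"
    by (rule closed_path_rotate_split_first_return_loops)
  have "set (concat ps) = set h" by (simp add: ps(1))
  have interior_exits: "\<forall>x\<in>set (butlast (map head p)). single_exit E tail x" if p: "p \<in> set ps" for p
  proof -
    have "set (map head p) \<subseteq> set (map head h)"
      using p \<open>set (concat ps) = set h\<close> by auto
    moreover have "v \<notin> set (butlast (map head p))"
      using ps(2) p unfolding first_return_loop_def by blast
    ultimately have "set (butlast (map head p)) \<subseteq> set (map head h) - {v}"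
      using in_set_butlastD by fastforce
    then show ?thesis using exits by blast
  qed
  have "length p \<le> card V" if "p \<in> set ps" for p
    using first_return_loop_length_le_card[OF assms(2)] ps(2) interior_exits that by blast
  then have "length h \<le> length ps * card V"
    using length_concat_le[of ps "card V"] ps(1) by simp
  have "3 \<le> length ps"
  proof (rule ccontr)
    assume "\<not> 3 \<le> length ps"
    then have "length ps \<le> 2" by simp
    then have "length ps * card V \<le> 2 * card V" by (rule mult_le_mono1)
    then show False using \<open>length h \<le> length ps * card V\<close> assms(4) by linarith
  qed
  consider "4 \<le> length ps" | "length ps = 3" using \<open>3 \<le> length ps\<close> by linarith
  then show ?thesis
  proof cases
    case 1
    have "count_list (map head h) v = length ps"
      using count_list_heads_concat_first_return_loops[OF ps(2)]
      by (simp only: ps(1) rotate_map[symmetric] count_list_rotate)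
    with 1 show ?thesis by (intro path_equiv_zero_if_four_returns[OF assms(1,3), of v]) simp
  next
    case 2
    then obtain p1 p2 p3 where ps3: "ps = [p1, p2, p3]"
      by (auto simp: numeral_eq_Suc length_Suc_conv)
    have same_start: "p = q" if "p \<in> set ps" "q \<in> set ps" "hd p = hd q" for p q
      by (rule first_return_loops_eq_if_single_exits[of E tail head v p q])
        (use ps(2) interior_exits that in auto)
    have "finite (out_arrows E tail v)"
      using assms(2) unfolding quiver_def out_arrows_def by simp
    moreover have "{hd p1, hd p2, hd p3} \<subseteq> out_arrows E tail v"
      using ps(2) ps3 first_return_loop_hd_out_arrow by auto
    ultimately have "card {hd p1, hd p2, hd p3} \<le> card (out_arrows E tail v)"
      by (rule card_mono)
    then have "card {hd p1, hd p2, hd p3} \<le> 2" using out_v by linarith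
    then have "hd p1 = hd p2 \<or> hd p2 = hd p3 \<or> hd p1 = hd p3"
      by (cases "hd p1 = hd p2"; cases "hd p2 = hd p3"; cases "hd p1 = hd p3") simp_all
    then have "p1 = p2 \<or> p2 = p3 \<or> p1 = p3"
      using same_start[of p1 p2] same_start[of p2 p3] same_start[of p1 p3] ps3 by auto
    moreover have "closed_path_in E tail head v p" if "p \<in> set ps" for p
      using ps(2) that unfolding first_return_loop_def by blast
    ultimately have "path_equiv E tail head c2 (Some (s, p1 @ p2 @ p3)) None"
      using path_equiv_zero_if_repeated_loop[of E tail head v p1 p2 p3] ps3 by simp
    then have "path_equiv E tail head c2 (Some (s, concat ps)) None" using ps3 by simp
    then have "path_equiv E tail head c2 (Some (s, rotate k h)) None" by (simp only: ps(1))
    with closed_path_rotate(2)[OF assms(3)] show ?thesis by (rule path_equiv.trans)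
  qed
qed

lemma path_equiv_zero_if_longer_than_3n:
  assumes "\<not> c2" "quiver V E tail head" "closed_path E tail head h" "3 * card V < length h"
  shows "path_equiv E tail head c2 (Some (s, h)) None"
proof -
  have "finite V" "set (map head h) \<subseteq> V"
    using assms(2,3) unfolding quiver_def closed_path_def is_path_def by auto
  with assms(4) obtain v where "3 < count_list (map head h) v"
    using pigeonhole_count_list[of V "map head h" 3] by auto
  then show ?thesis using path_equiv_zero_if_four_returns[OF assms(1,3), of v] by simp
qed

lemma path_equiv_zero_if_longer_than_2n:
  assumes "\<not> c2" "quiver V E tail head" "strongly_connected V E tail head"
    and "mQ E tail head = card V" "card E \<le> card V + 1"
    and "closed_path E tail head h" "2 * card V < length h"
  shows "path_equiv E tail head c2 (Some (s, h)) None"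
proof -
  obtain c where "primitive E tail head c" "length c = card V"
    using mQ_attained[OF assms(2,3)] assms(4) by metis
  moreover have "finite E" using assms(2) unfolding quiver_def by blast
  ultimately obtain b where b: "\<And>x. x \<noteq> b \<Longrightarrow> single_exit E tail x"
    "\<And>x. card (out_arrows E tail x) \<le> 2"
    using single_exits_if_few_extra_arrows assms(5) by metis
  \<comment> \<open>the loops must be cut at b if h passes through b, as b has two exits\<close>
  define v where "v = (if b \<in> set (map head h) then b else head (hd h))"
  have "h \<noteq> []" using assms(6) by (rule closed_path_nonempty)
  then have "v \<in> set (map head h)" unfolding v_def by auto
  have "x \<noteq> b" if "x \<in> set (map head h) - {v}" for x
    using that unfolding v_def by (auto split: if_splits)
  then have "\<forall>x\<in>set (map head h) - {v}. single_exit E tail x" using b(1) by blast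
  with \<open>v \<in> set (map head h)\<close> show ?thesis
    using path_equiv_zero_if_long_with_few_exits[OF assms(1,2,6,7)] b(2) by blast
qed

theorem lemma2p4:
  fixes V :: "'v set" and E :: "'e set" and tail head :: "'e \<Rightarrow> 'v"
    and n d m :: nat and h :: "'e list"
  assumes "infinite (UNIV :: 'k::field set)"
    and "CHAR('k) \<noteq> 2"
    and "in_Qndm V E tail head n d m"
    and "closed_path E tail head h"
    and "\<not> path_equiv E tail head (CHAR('k) = 2) (Some (True, h)) None"
  shows "length h \<le> bound_M n d m"
  \<comment> \<open>K enters only through its characteristic\<close>
proof (rule ccontr)
  assume "\<not> length h \<le> bound_M n d m"
  have Q: "quiver V E tail head" "strongly_connected V E tail head"
    "card V = n" "card E = d" "mQ E tail head = m"
    using assms(3) unfolding in_Qndm_def by auto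
  have "path_equiv E tail head (CHAR('k) = 2) (Some (True, h)) None"
  proof (cases "n = m \<and> (d = n \<or> d = n + 1)")
    case True
    then have "bound_M n d m = 2 * card V" unfolding bound_M_def Q(3) by (rule if_P)
    then have "2 * card V < length h" using \<open>\<not> length h \<le> bound_M n d m\<close> by simp
    with True show ?thesis using path_equiv_zero_if_longer_than_2n[OF _ Q(1,2)] assms(2,4) Q by auto
  next
    case False
    then have "bound_M n d m = 3 * card V" unfolding bound_M_def Q(3) by (rule if_not_P)
    then have "3 * card V < length h" using \<open>\<not> length h \<le> bound_M n d m\<close> by simp
    then show ?thesis using path_equiv_zero_if_longer_than_3n[OF _ Q(1) assms(4)] assms(2) by blast
  qed
  with assms(5) show False by contradiction
qed

end
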